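(* Let $(G,M,I)$ be a finite formal context and fix an integer $k\ge 0$. Consider the cosheaf $\mathcal F_k$ on $D(G,M,I)$ with costalks $\mathcal F_k(\sigma)=C_k(\Delta[\sigma'])$ (the degree-$k$ part of the real simplicial chain complex of the full simplex on $\sigma'$) and extension maps $\mathcal F_k(\sigma\subseteq\tau):\mathcal F_k(\tau)\to\mathcal F_k(\sigma)$ induced by the inclusions $\tau'\subseteq\sigma'$. Then the cellular cosheaf homology of $\mathcal F_k$ satisfies $H_j(\mathcal F_k)=0$ for all $j>0$.
   Context: A formal context is a triple $(G,M,I)$ with $I\subseteq G\times M$; for $A\subseteq G$, $A'=\{m: gIm\ \forall g\in A\}$, for $B\subseteq M$, $B'=\{g: gIm\ \forall m\in B\}$. The Dowker complex $D(G,M,I)$ is the abstract simplicial complex on $G$ whose simplices are the nonempty $\sigma\subseteq G$ with $\sigma'\ne\emptyset$. Fix linear orders on $G$ and $M$ (used to orient simplices). For a cosheaf $\mathcal F$ of real vector spaces on $D(G,M,I)$ (vector spaces $\mathcal F(\sigma)$ and linear maps $\mathcal F(\sigma\subseteq\tau):\mathcal F(\tau)\to\mathcal F(\sigma)$, functorial in $\sigma\subseteq\tau$), its cellular cosheaf homology is the homology of the chain complex $C_j=\bigoplus_{\dim\tau=j}\mathcal F(\tau)$ with $\partial_j x=\sum_{i=0}^{j}(-1)^i\mathcal F(\tau_i\subseteq\tau)(x)$ for $x\in\mathcal F(\tau)$, $\tau=\{g_0<\dots<g_j\}$, $\tau_i=\tau\setminus\{g_i\}$. *)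

theory Defs
  imports Complex_Main
begin

text \<open>Derivation operator for a formal context (G,M,I): for A a set of objects,
  A' is the set of attributes shared by all objects of A.\<close>
definition intent :: "'m set \<Rightarrow> ('g \<times> 'm) set \<Rightarrow> 'g set \<Rightarrow> 'm set" where
  "intent M I A = {m \<in> M. \<forall>g\<in>A. (g, m) \<in> I}"

definition dowker :: "'g set \<Rightarrow> 'm set \<Rightarrow> ('g \<times> 'm) set \<Rightarrow> 'g set set" where
  "dowker G M I = {\<sigma>. \<sigma> \<subseteq> G \<and> \<sigma> \<noteq> {} \<and> intent M I \<sigma> \<noteq> {}}"

definition ksimplices :: "nat \<Rightarrow> 'm set \<Rightarrow> 'm set set" where
  "ksimplices k S = {\<rho>. \<rho> \<subseteq> S \<and> card \<rho> = k + 1}"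

text \<open>Costalk F_k(sigma) = C_k(Delta[sigma']) as real-valued coefficient functions
  on the k-simplices of Delta[sigma'] (zero elsewhere).\<close>
definition costalk :: "'g set \<Rightarrow> 'm set \<Rightarrow> ('g \<times> 'm) set \<Rightarrow> nat \<Rightarrow> 'g set \<Rightarrow> ('m set \<Rightarrow> real) set" where
  "costalk G M I k \<sigma> = {x. \<forall>\<rho>. \<rho> \<notin> ksimplices k (intent M I \<sigma>) \<longrightarrow> x \<rho> = 0}"

text \<open>Extension map F_k(sigma \<subseteq> tau): F_k(tau) \<rightarrow> F_k(sigma), the chain map induced by
  the inclusion tau' \<subseteq> sigma' (a basis simplex rho is sent to rho).\<close>
definition ext_map :: "'m set \<Rightarrow> ('g \<times> 'm) set \<Rightarrow> nat \<Rightarrow> 'g set \<Rightarrow> 'g set \<Rightarrow> ('m set \<Rightarrow> real) \<Rightarrow> ('m set \<Rightarrow> real)" where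
  "ext_map M I k \<sigma> \<tau> x = (\<lambda>\<rho>. if \<rho> \<in> ksimplices k (intent M I \<tau>) then x \<rho> else 0)"

definition dsimp :: "'g set \<Rightarrow> 'm set \<Rightarrow> ('g \<times> 'm) set \<Rightarrow> nat \<Rightarrow> 'g set set" where
  "dsimp G M I j = {\<tau> \<in> dowker G M I. card \<tau> = j + 1}"

text \<open>Cellular chains C_j = direct sum over j-simplices tau of F_k(tau).\<close>
definition cchains :: "'g set \<Rightarrow> 'm set \<Rightarrow> ('g \<times> 'm) set \<Rightarrow> nat \<Rightarrow> nat \<Rightarrow> ('g set \<Rightarrow> 'm set \<Rightarrow> real) set" where
  "cchains G M I k j = {c. \<forall>\<tau>. (\<tau> \<in> dsimp G M I j \<longrightarrow> c \<tau> \<in> costalk G M I k \<tau>)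
                                \<and> (\<tau> \<notin> dsimp G M I j \<longrightarrow> c \<tau> = (\<lambda>_. 0))}"

definition face :: "'g::linorder set \<Rightarrow> nat \<Rightarrow> 'g set" where
  "face \<tau> i = \<tau> - {sorted_list_of_set \<tau> ! i}"

definition cbd :: "'g::linorder set \<Rightarrow> 'm set \<Rightarrow> ('g \<times> 'm) set \<Rightarrow> nat \<Rightarrow> nat
                   \<Rightarrow> ('g set \<Rightarrow> 'm set \<Rightarrow> real) \<Rightarrow> ('g set \<Rightarrow> 'm set \<Rightarrow> real)" where
  "cbd G M I k j c = (\<lambda>\<sigma> \<rho>. \<Sum>\<tau>\<in>dsimp G M I j. \<Sum>i\<in>{0..j}.
      if face \<tau> i = \<sigma> then (-1) ^ i * ext_map M I k \<sigma> \<tau> (c \<tau>) \<rho> else 0)"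

definition homology_vanishes :: "'g::linorder set \<Rightarrow> 'm set \<Rightarrow> ('g \<times> 'm) set \<Rightarrow> nat \<Rightarrow> nat \<Rightarrow> bool" where
  "homology_vanishes G M I k j \<longleftrightarrow>
     (\<forall>c \<in> cchains G M I k j. cbd G M I k j c = (\<lambda>_ _. 0) \<longrightarrow>
        (\<exists>d \<in> cchains G M I k (Suc j). cbd G M I k (Suc j) d = c))"

end

theory Submission imports Defs begin

text \<open>A chain of \<open>F\<^sub>k\<close> is a family of coefficients \<open>c(\<tau>, \<rho>)\<close>, and \<open>\<rho>\<close> is a simplex of
  \<open>\<Delta>[\<tau>']\<close> exactly when \<open>\<tau> \<subseteq> \<rho>'\<close>. So for each fixed k-simplex \<open>\<rho>\<close> the coefficients \<open>c(-, \<rho>)\<close>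
  form a chain of the full simplex on the extent \<open>\<rho>'\<close>, the boundary acts on each \<open>\<rho>\<close> separately,
  and the homology is a direct sum of (augmented) homologies of full simplices, which vanish.
  Concretely, the boundary is inverted on cycles by coning from the least object \<open>v\<close> of \<open>\<rho>'\<close>:
  the cone of \<open>c\<close> has coefficient \<open>c(\<sigma> - {v}, \<rho>)\<close> at every \<open>\<sigma> \<ni> v\<close>. As \<open>v\<close> precedes all other
  vertices, coning introduces no sign.\<close>

lemma card_less_sorted_list_of_set_nth:
  fixes A :: "'a::linorder set"
  assumes "finite A" "i < card A"
  shows "card {x\<in>A. x < sorted_list_of_set A ! i} = i"
proof -
  define xs where "xs = sorted_list_of_set A"
  have xs: "set xs = A" "length xs = card A" "sorted_wrt (<) xs" "distinct xs"
    using assms by (auto simp: xs_def)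
  have "{x\<in>A. x < xs ! i} = (!) xs ` {..<i}"
  proof
    show "{x\<in>A. x < xs ! i} \<subseteq> (!) xs ` {..<i}"
    proof
      fix x assume x: "x \<in> {x\<in>A. x < xs ! i}"
      then obtain j where j: "j < length xs" "x = xs ! j"
        using xs by (auto simp: in_set_conv_nth)
      have "j < i"
      proof (rule ccontr)
        assume "\<not> j < i"
        then have "xs ! i \<le> xs ! j"
          using sorted_wrt_nth_less[OF xs(3), of i j] j by (cases "i = j") auto
        then show False using x j by auto
      qed
      then show "x \<in> (!) xs ` {..<i}" using j by auto
    qed
    show "(!) xs ` {..<i} \<subseteq> {x\<in>A. x < xs ! i}"
      using sorted_wrt_nth_less[OF xs(3)] xs assms(2) by (auto simp: nth_mem)
  qed
  moreover have "inj_on ((!) xs) {..<i}"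
    by (rule inj_on_nth) (use xs assms(2) in auto)
  ultimately show ?thesis by (simp add: xs_def card_image)
qed

definition insertion_sign :: "'a::linorder set \<Rightarrow> 'a \<Rightarrow> real" where
  "insertion_sign A g = (-1) ^ card {x\<in>A. x < g}"

lemma insertion_sign_insert_self [simp]: "insertion_sign (insert g A) g = insertion_sign A g"
  unfolding insertion_sign_def by (rule arg_cong[where f = "\<lambda>A. (-1) ^ card A"]) auto

lemma insertion_sign_least:
  assumes "\<And>x. x \<in> A \<Longrightarrow> g \<le> x"
  shows "insertion_sign A g = 1"
proof -
  have "{x\<in>A. x < g} = {}" using assms by force
  then show ?thesis unfolding insertion_sign_def by (simp only: card.empty power_0)
qed

lemma insertion_sign_insert_less:
  assumes "finite A" "v \<notin> A" "v < g"
  shows "insertion_sign (insert v A) g = - insertion_sign A g"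
proof -
  have "{x\<in>insert v A. x < g} = insert v {x\<in>A. x < g}" using assms(3) by auto
  then show ?thesis using assms(1,2) by (simp add: insertion_sign_def)
qed

lemma sum_faces_eq_sum_vertices:
  fixes \<tau> :: "'a::linorder set"
  assumes "finite \<tau>" "card \<tau> = Suc n"
  shows "(\<Sum>i\<in>{0..n}. if face \<tau> i = \<sigma> then (-1) ^ i * x else 0)
       = (\<Sum>g\<in>\<tau>. if \<tau> - {g} = \<sigma> then insertion_sign \<tau> g * x else 0)"
proof -
  define xs where "xs = sorted_list_of_set \<tau>"
  have "bij_betw ((!) xs) {0..n} \<tau>"
    by (rule bij_betw_nth) (use assms in \<open>auto simp: xs_def\<close>)
  then have "(\<Sum>g\<in>\<tau>. if \<tau> - {g} = \<sigma> then insertion_sign \<tau> g * x else 0)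
      = (\<Sum>i\<in>{0..n}. if \<tau> - {xs ! i} = \<sigma> then insertion_sign \<tau> (xs ! i) * x else 0)"
    by (rule sum.reindex_bij_betw[symmetric])
  also have "\<dots> = (\<Sum>i\<in>{0..n}. if face \<tau> i = \<sigma> then (-1) ^ i * x else 0)"
    using card_less_sorted_list_of_set_nth[OF assms(1)] assms(2)
    by (intro sum.cong) (auto simp: face_def insertion_sign_def xs_def)
  finally show ?thesis ..
qed

lemma sum_sum_remove_vertex:
  assumes "finite G" "D \<subseteq> Pow G"
  shows "(\<Sum>\<tau>\<in>D. \<Sum>g\<in>\<tau>. if \<tau> - {g} = \<sigma> then f \<tau> g else 0)
       = (\<Sum>g\<in>G - \<sigma>. if insert g \<sigma> \<in> D then f (insert g \<sigma>) g else 0)"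
proof -
  have finD: "finite D" using assms finite_subset by (metis finite_Pow_iff)
  have "(\<Sum>\<tau>\<in>D. \<Sum>g\<in>\<tau>. if \<tau> - {g} = \<sigma> then f \<tau> g else 0)
      = (\<Sum>\<tau>\<in>D. \<Sum>g\<in>G. if g \<in> \<tau> \<and> \<tau> - {g} = \<sigma> then f \<tau> g else 0)"
    using assms by (intro sum.cong refl sum.mono_neutral_cong_left) auto
  also have "\<dots> = (\<Sum>g\<in>G. \<Sum>\<tau>\<in>D. if \<tau> = insert g \<sigma> \<and> g \<notin> \<sigma> then f (insert g \<sigma>) g else 0)"
    by (subst sum.swap) (intro sum.cong refl, auto)
  also have "\<dots> = (\<Sum>g\<in>G. if g \<notin> \<sigma> \<and> insert g \<sigma> \<in> D then f (insert g \<sigma>) g else 0)"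
  proof (intro sum.cong refl)
    fix g
    show "(\<Sum>\<tau>\<in>D. if \<tau> = insert g \<sigma> \<and> g \<notin> \<sigma> then f (insert g \<sigma>) g else 0)
        = (if g \<notin> \<sigma> \<and> insert g \<sigma> \<in> D then f (insert g \<sigma>) g else 0)"
      using finD by (cases "g \<in> \<sigma>") (simp_all add: sum.delta')
  qed
  also have "\<dots> = (\<Sum>g\<in>G - \<sigma>. if insert g \<sigma> \<in> D then f (insert g \<sigma>) g else 0)"
    using assms(1) by (intro sum.mono_neutral_cong_right) auto
  finally show ?thesis .
qed

lemma ksimplices_intent_iff:
  "\<rho> \<in> ksimplices k (intent M I \<sigma>) \<longleftrightarrow>
     \<rho> \<subseteq> M \<and> card \<rho> = Suc k \<and> (\<forall>g\<in>\<sigma>. \<forall>m\<in>\<rho>. (g, m) \<in> I)"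
  by (auto simp: ksimplices_def intent_def)

lemma ksimplices_intent_insert:
  "\<rho> \<in> ksimplices k (intent M I (insert g \<sigma>)) \<longleftrightarrow>
     \<rho> \<in> ksimplices k (intent M I \<sigma>) \<and> (\<forall>m\<in>\<rho>. (g, m) \<in> I)"
  by (auto simp: ksimplices_intent_iff)

lemma intent_ne_if_ksimplices: "\<rho> \<in> ksimplices k (intent M I \<sigma>) \<Longrightarrow> intent M I \<sigma> \<noteq> {}"
  by (auto simp: ksimplices_def)

lemma dsimp_iff:
  "\<tau> \<in> dsimp G M I n \<longleftrightarrow> \<tau> \<subseteq> G \<and> \<tau> \<noteq> {} \<and> intent M I \<tau> \<noteq> {} \<and> card \<tau> = Suc n"
  by (auto simp: dsimp_def dowker_def)

lemma insert_dsimp_iff: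
  assumes "g \<notin> \<sigma>" "\<rho> \<in> ksimplices k (intent M I (insert g \<sigma>))"
  shows "insert g \<sigma> \<in> dsimp G M I (Suc n) \<longleftrightarrow> g \<in> G \<and> \<sigma> \<in> dsimp G M I n"
proof -
  have "\<rho> \<in> ksimplices k (intent M I \<sigma>)"
    using assms(2) by (simp add: ksimplices_intent_insert)
  note intent_ne_if_ksimplices[OF assms(2)] intent_ne_if_ksimplices[OF this]
  moreover have "card (insert g \<sigma>) = Suc (Suc n) \<longleftrightarrow> card \<sigma> = Suc n"
    using assms(1) by (cases "finite \<sigma>") auto
  ultimately show ?thesis by (auto simp: dsimp_iff)
qed

lemma cchains_eq_0:
  assumes "c \<in> cchains G M I k n" "\<not> (\<tau> \<in> dsimp G M I n \<and> \<rho> \<in> ksimplices k (intent M I \<tau>))"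
  shows "c \<tau> \<rho> = 0"
  using assms unfolding cchains_def costalk_def by (cases "\<tau> \<in> dsimp G M I n") auto

lemma cbd_eq_sum_insert:
  fixes G :: "'g::linorder set"
  assumes G: "finite G" and c: "c \<in> cchains G M I k n"
  shows "cbd G M I k n c \<sigma> \<rho> = (\<Sum>g\<in>G - \<sigma>. insertion_sign \<sigma> g * c (insert g \<sigma>) \<rho>)"
proof -
  let ?D = "dsimp G M I n"
  have ext: "ext_map M I k \<sigma>' \<tau> (c \<tau>) \<rho> = c \<tau> \<rho>" for \<sigma>' \<tau>
    using cchains_eq_0[OF c, of \<tau> \<rho>] by (auto simp: ext_map_def)
  have D: "?D \<subseteq> Pow G" by (auto simp: dsimp_iff)
  have "cbd G M I k n c \<sigma> \<rho>
      = (\<Sum>\<tau>\<in>?D. \<Sum>i\<in>{0..n}. if face \<tau> i = \<sigma> then (-1) ^ i * c \<tau> \<rho> else 0)"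
    unfolding cbd_def ext ..
  also have "\<dots> = (\<Sum>\<tau>\<in>?D. \<Sum>g\<in>\<tau>. if \<tau> - {g} = \<sigma> then insertion_sign \<tau> g * c \<tau> \<rho> else 0)"
  proof (rule sum.cong[OF refl])
    fix \<tau> assume "\<tau> \<in> ?D"
    then have "finite \<tau>" "card \<tau> = Suc n" using D G finite_subset by (auto simp: dsimp_iff)
    then show "(\<Sum>i\<in>{0..n}. if face \<tau> i = \<sigma> then (-1) ^ i * c \<tau> \<rho> else 0)
        = (\<Sum>g\<in>\<tau>. if \<tau> - {g} = \<sigma> then insertion_sign \<tau> g * c \<tau> \<rho> else 0)"
      by (rule sum_faces_eq_sum_vertices)
  qed
  also have "\<dots> = (\<Sum>g\<in>G - \<sigma>. if insert g \<sigma> \<in> ?D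
                       then insertion_sign (insert g \<sigma>) g * c (insert g \<sigma>) \<rho> else 0)"
    by (rule sum_sum_remove_vertex[OF G D])
  also have "\<dots> = (\<Sum>g\<in>G - \<sigma>. insertion_sign \<sigma> g * c (insert g \<sigma>) \<rho>)"
    using cchains_eq_0[OF c] by (intro sum.cong refl) auto
  finally show ?thesis .
qed

definition extent :: "'g set \<Rightarrow> ('g \<times> 'm) set \<Rightarrow> 'm set \<Rightarrow> 'g set" where
  "extent G I \<rho> = {g\<in>G. \<forall>m\<in>\<rho>. (g, m) \<in> I}"

definition cone_apex :: "'g::linorder set \<Rightarrow> ('g \<times> 'm) set \<Rightarrow> 'm set \<Rightarrow> 'g" where
  "cone_apex G I \<rho> = Min (extent G I \<rho>)"

lemma subset_extent_if_ksimplices: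
  "\<sigma> \<subseteq> G \<Longrightarrow> \<rho> \<in> ksimplices k (intent M I \<sigma>) \<Longrightarrow> \<sigma> \<subseteq> extent G I \<rho>"
  by (auto simp: extent_def ksimplices_intent_iff)

lemma cone_apex_le: "finite G \<Longrightarrow> g \<in> extent G I \<rho> \<Longrightarrow> cone_apex G I \<rho> \<le> g"
  by (simp add: cone_apex_def extent_def)

lemma cone_apex_in_extent: "finite G \<Longrightarrow> extent G I \<rho> \<noteq> {} \<Longrightarrow> cone_apex G I \<rho> \<in> extent G I \<rho>"
  unfolding cone_apex_def by (rule Min_in) (simp_all add: extent_def)

definition cone :: "'g::linorder set \<Rightarrow> 'm set \<Rightarrow> ('g \<times> 'm) set \<Rightarrow> nat \<Rightarrow> nat
                    \<Rightarrow> ('g set \<Rightarrow> 'm set \<Rightarrow> real) \<Rightarrow> ('g set \<Rightarrow> 'm set \<Rightarrow> real)" where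
  "cone G M I k j c = (\<lambda>\<sigma> \<rho>.
     if \<sigma> \<in> dsimp G M I (Suc j) \<and> \<rho> \<in> ksimplices k (intent M I \<sigma>) \<and> cone_apex G I \<rho> \<in> \<sigma>
     then c (\<sigma> - {cone_apex G I \<rho>}) \<rho> else 0)"

lemma cone_in_cchains: "cone G M I k j c \<in> cchains G M I k (Suc j)"
  by (auto simp: cchains_def costalk_def cone_def fun_eq_iff)

lemma cone_insert:
  assumes "g \<in> G - \<sigma>"
  shows "cone G M I k j c (insert g \<sigma>) \<rho> =
    (if \<sigma> \<in> dsimp G M I j \<and> \<rho> \<in> ksimplices k (intent M I \<sigma>) \<and> g \<in> extent G I \<rho>
        \<and> cone_apex G I \<rho> \<in> insert g \<sigma>
     then c (insert g \<sigma> - {cone_apex G I \<rho>}) \<rho> else 0)"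
  using assms insert_dsimp_iff[of g \<sigma> \<rho> k M I G j]
  by (auto simp: cone_def extent_def ksimplices_intent_insert)

lemma cbd_cone_off_support:
  assumes "finite G" "\<not> (\<sigma> \<in> dsimp G M I j \<and> \<rho> \<in> ksimplices k (intent M I \<sigma>))"
  shows "cbd G M I k (Suc j) (cone G M I k j c) \<sigma> \<rho> = 0"
  using assms by (auto simp: cbd_eq_sum_insert[OF _ cone_in_cchains] cone_insert intro!: sum.neutral)

lemma cbd_cone_apex_notin:
  assumes G: "finite G" and \<sigma>: "\<sigma> \<in> dsimp G M I j" and \<rho>: "\<rho> \<in> ksimplices k (intent M I \<sigma>)"
    and v: "cone_apex G I \<rho> \<notin> \<sigma>"
  shows "cbd G M I k (Suc j) (cone G M I k j c) \<sigma> \<rho> = c \<sigma> \<rho>"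
proof -
  let ?v = "cone_apex G I \<rho>"
  have sub: "\<sigma> \<subseteq> extent G I \<rho>"
    using \<sigma> \<rho> by (simp add: dsimp_iff subset_extent_if_ksimplices)
  then have vE: "?v \<in> extent G I \<rho>"
    using \<sigma> G by (intro cone_apex_in_extent) (auto simp: dsimp_iff)
  have "cbd G M I k (Suc j) (cone G M I k j c) \<sigma> \<rho>
      = (\<Sum>g\<in>G - \<sigma>. insertion_sign \<sigma> g * cone G M I k j c (insert g \<sigma>) \<rho>)"
    by (rule cbd_eq_sum_insert[OF G cone_in_cchains])
  also have "\<dots> = (\<Sum>g\<in>G - \<sigma>. if g = ?v then insertion_sign \<sigma> ?v * c \<sigma> \<rho> else 0)"
    using \<sigma> \<rho> v vE by (intro sum.cong refl) (auto simp: cone_insert)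
  also have "\<dots> = insertion_sign \<sigma> ?v * c \<sigma> \<rho>"
    using G vE v by (simp add: sum.delta' extent_def)
  also have "insertion_sign \<sigma> ?v = 1"
    using sub G by (intro insertion_sign_least cone_apex_le) auto
  finally show ?thesis by simp
qed

lemma cbd_cone_apex_in:
  assumes G: "finite G" and c: "c \<in> cchains G M I k j" and cycle: "cbd G M I k j c = (\<lambda>_ _. 0)"
    and \<sigma>: "\<sigma> \<in> dsimp G M I j" and \<rho>: "\<rho> \<in> ksimplices k (intent M I \<sigma>)"
    and v: "cone_apex G I \<rho> \<in> \<sigma>"
  shows "cbd G M I k (Suc j) (cone G M I k j c) \<sigma> \<rho> = c \<sigma> \<rho>"
proof -
  let ?v = "cone_apex G I \<rho>"
  define \<sigma>\<^sub>0 where "\<sigma>\<^sub>0 = \<sigma> - {?v}"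
  have sub: "\<sigma> \<subseteq> extent G I \<rho>" and fin: "finite \<sigma>\<^sub>0"
    using \<sigma> \<rho> G by (auto simp: dsimp_iff subset_extent_if_ksimplices \<sigma>\<^sub>0_def intro: finite_subset)
  have \<sigma>_eq: "\<sigma> = insert ?v \<sigma>\<^sub>0" and "?v \<notin> \<sigma>\<^sub>0" using v by (auto simp: \<sigma>\<^sub>0_def)
  have summand: "insertion_sign \<sigma> g * cone G M I k j c (insert g \<sigma>) \<rho>
      = - (insertion_sign \<sigma>\<^sub>0 g * c (insert g \<sigma>\<^sub>0) \<rho>)" if g: "g \<in> G - \<sigma>" for g
  proof (cases "g \<in> extent G I \<rho>")
    case True
    moreover have "?v \<noteq> g" using g v by auto
    ultimately have "?v < g" using cone_apex_le[OF G] by (simp add: order.strict_iff_order)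
    have "insertion_sign \<sigma> g = - insertion_sign \<sigma>\<^sub>0 g"
      unfolding \<sigma>_eq using fin \<open>?v \<notin> \<sigma>\<^sub>0\<close> \<open>?v < g\<close> by (rule insertion_sign_insert_less)
    moreover have "insert g \<sigma> - {?v} = insert g \<sigma>\<^sub>0" using \<open>?v < g\<close> by (auto simp: \<sigma>\<^sub>0_def)
    ultimately show ?thesis using g True \<sigma> \<rho> v by (simp add: cone_insert)
  next
    case False
    then have "\<rho> \<notin> ksimplices k (intent M I (insert g \<sigma>\<^sub>0))"
      using g by (auto simp: extent_def ksimplices_intent_insert)
    then show ?thesis using g False by (simp add: cone_insert cchains_eq_0[OF c])
  qed
  have "G - \<sigma>\<^sub>0 = insert ?v (G - \<sigma>)" using v \<sigma> by (auto simp: \<sigma>\<^sub>0_def dsimp_iff)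
  then have "0 = insertion_sign \<sigma>\<^sub>0 ?v * c \<sigma> \<rho>
      + (\<Sum>g\<in>G - \<sigma>. insertion_sign \<sigma>\<^sub>0 g * c (insert g \<sigma>\<^sub>0) \<rho>)"
    using fun_cong[OF fun_cong[OF cycle, of \<sigma>\<^sub>0], of \<rho>] G v
    by (simp add: cbd_eq_sum_insert[OF G c] \<sigma>_eq[symmetric])
  moreover have "insertion_sign \<sigma>\<^sub>0 ?v = 1"
    using sub G by (intro insertion_sign_least cone_apex_le) (auto simp: \<sigma>\<^sub>0_def)
  moreover have "cbd G M I k (Suc j) (cone G M I k j c) \<sigma> \<rho>
      = - (\<Sum>g\<in>G - \<sigma>. insertion_sign \<sigma>\<^sub>0 g * c (insert g \<sigma>\<^sub>0) \<rho>)"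
    by (simp add: cbd_eq_sum_insert[OF G cone_in_cchains] summand sum_negf)
  ultimately show ?thesis by simp
qed

lemma cbd_cone_cycle:
  assumes "finite G" "c \<in> cchains G M I k j" "cbd G M I k j c = (\<lambda>_ _. 0)"
  shows "cbd G M I k (Suc j) (cone G M I k j c) = c"
proof (intro ext)
  fix \<sigma> \<rho>
  show "cbd G M I k (Suc j) (cone G M I k j c) \<sigma> \<rho> = c \<sigma> \<rho>"
    using assms cbd_cone_off_support cbd_cone_apex_notin cbd_cone_apex_in cchains_eq_0
    by metis
qed

text \<open>Degree 0 is included: since \<open>face\<close> may be empty, \<open>cbd\<close> in degree 0 is the augmentation.\<close>
lemma homology_vanishes_dowker:
  assumes "finite G"
  shows "homology_vanishes G M I k j"
  unfolding homology_vanishes_def using assms cone_in_cchains cbd_cone_cycle by blast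

theorem mainTheorem5:
  fixes G :: "'g::linorder set" and M :: "'m::linorder set" and I :: "('g \<times> 'm) set"
    and k :: nat
  assumes "finite G" and "finite M" and "I \<subseteq> G \<times> M"
  shows "\<forall>j > 0. homology_vanishes G M I k j"
  using homology_vanishes_dowker[OF assms(1)] by blast

end
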